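(* Let $k$ be a field of characteristic $0$ and let $F(X,Y), G(X,Y)\in k[X,Y]$ be such that the determinant of the Jacobian matrix $\begin{pmatrix}\partial F/\partial X & \partial F/\partial Y\\ \partial G/\partial X & \partial G/\partial Y\end{pmatrix}$ is a nonzero element of $k$. Then the system $$F(\mathcal{U}(t),\mathcal{V}(t))=tX+(1-t)F(X,Y),\qquad G(\mathcal{U}(t),\mathcal{V}(t))=tY+(1-t)G(X,Y),$$ with initial conditions $\mathcal{U}(0)=X$, $\mathcal{V}(0)=Y$, has a unique solution $\mathcal{U}(t),\mathcal{V}(t)\in k[X,Y][[t]]$.
   Context: $k[X,Y][[t]]$ denotes the ring of formal power series in $t$ with coefficients in $k[X,Y]$; for a power series, evaluation at $t=0$ means taking its constant term. *)

theory Defs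
  imports "HOL-Computational_Algebra.Polynomial" "HOL-Computational_Algebra.Formal_Power_Series"
begin

text \<open>We model k[X,Y] as (k[X])[Y], i.e. the type 'a poly poly:
 the outer variable is Y, the coefficients are polynomials in X.\<close>

definition varX :: "'a::comm_semiring_1 poly poly" where
  "varX = [:[:0, 1:]:]"

definition varY :: "'a::comm_semiring_1 poly poly" where
  "varY = [:0, 1:]"

definition pdX :: "'a::idom poly poly \<Rightarrow> 'a poly poly" where
  "pdX F = map_poly pderiv F"

definition pdY :: "'a::idom poly poly \<Rightarrow> 'a poly poly" where
  "pdY F = pderiv F"

text \<open>Substitution F(U,V) of power series U, V in k[X,Y][[t]] into F in k[X,Y]
  (k embedded as constants).\<close>
definition eval2 :: "'a::idom poly poly \<Rightarrow> 'a poly poly fps \<Rightarrow> 'a poly poly fps \<Rightarrow> 'a poly poly fps" where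
  "eval2 F U V = poly (map_poly (\<lambda>q. poly (map_poly (\<lambda>c. fps_const [:[:c:]:]) q) U) F) V"

end

theory Submission
  imports Defs
begin

text \<open>
  Write U = \<Sum> u_n t^n and V = \<Sum> v_n t^n and compare coefficients of t. In degree 0 both
  equations hold by the initial conditions. In degree n > 0 the n-th coefficient of F(U,V) is
  F_X u_n + F_Y v_n plus terms involving only u_k, v_k for k < n, and likewise for G. Since the
  Jacobian determinant is a unit of k[X,Y], the n-th equations determine (u_n, v_n) uniquely by
  Cramer's rule, whatever the lower coefficients are.
\<close>

unbundle fps_syntax

text \<open>
  Abstracts the first-order behaviour of substitution into a polynomial: a and b play the role of
  its partial derivatives at the constant terms (x0, y0).
\<close>

definition coeffwise_affine ::
    "'a::comm_ring_1 \<Rightarrow> 'a \<Rightarrow> ('a fps \<Rightarrow> 'a fps \<Rightarrow> 'a fps) \<Rightarrow> 'a \<Rightarrow> 'a \<Rightarrow> 'a \<Rightarrow> bool" where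
  "coeffwise_affine x0 y0 P p0 a b \<longleftrightarrow>
     (\<forall>U V. U $ 0 = x0 \<longrightarrow> V $ 0 = y0 \<longrightarrow> P U V $ 0 = p0) \<and>
     (\<forall>U V U' V' n. 0 < n \<longrightarrow> U $ 0 = x0 \<longrightarrow> V $ 0 = y0 \<longrightarrow>
        (\<forall>k<n. U $ k = U' $ k \<and> V $ k = V' $ k) \<longrightarrow>
        P U V $ n - P U' V' $ n = a * (U $ n - U' $ n) + b * (V $ n - V' $ n))"

lemma coeffwise_affineI:
  assumes "\<And>U V. U $ 0 = x0 \<Longrightarrow> V $ 0 = y0 \<Longrightarrow> P U V $ 0 = p0"
    and "\<And>U V U' V' n. 0 < n \<Longrightarrow> U $ 0 = x0 \<Longrightarrow> V $ 0 = y0 \<Longrightarrow>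
           (\<And>k. k < n \<Longrightarrow> U $ k = U' $ k \<and> V $ k = V' $ k) \<Longrightarrow>
           P U V $ n - P U' V' $ n = a * (U $ n - U' $ n) + b * (V $ n - V' $ n)"
  shows "coeffwise_affine x0 y0 P p0 a b"
  using assms unfolding coeffwise_affine_def by blast

lemma coeffwise_affine_nth_0:
  "coeffwise_affine x0 y0 P p0 a b \<Longrightarrow> U $ 0 = x0 \<Longrightarrow> V $ 0 = y0 \<Longrightarrow> P U V $ 0 = p0"
  unfolding coeffwise_affine_def by blast

lemma coeffwise_affine_nth_diff:
  "coeffwise_affine x0 y0 P p0 a b \<Longrightarrow> 0 < n \<Longrightarrow> U $ 0 = x0 \<Longrightarrow> V $ 0 = y0 \<Longrightarrow>
   (\<And>k. k < n \<Longrightarrow> U $ k = U' $ k \<and> V $ k = V' $ k) \<Longrightarrow>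
   P U V $ n - P U' V' $ n = a * (U $ n - U' $ n) + b * (V $ n - V' $ n)"
  unfolding coeffwise_affine_def by blast

lemma coeffwise_affine_nth_cong:
  assumes P: "coeffwise_affine x0 y0 P p0 a b" and "U $ 0 = x0" "V $ 0 = y0"
    and agree: "\<And>k. k \<le> n \<Longrightarrow> U $ k = U' $ k \<and> V $ k = V' $ k"
  shows "P U V $ n = P U' V' $ n"
proof (cases "n = 0")
  case True
  with assms show ?thesis
    using agree[of 0] coeffwise_affine_nth_0[OF P] by simp
next
  case False
  then have "P U V $ n - P U' V' $ n = a * (U $ n - U' $ n) + b * (V $ n - V' $ n)"
    using assms by (intro coeffwise_affine_nth_diff[OF P]) auto
  with agree[of n] show ?thesis by simp
qed

lemma coeffwise_affine_const: "coeffwise_affine x0 y0 (\<lambda>U V. fps_const p) p 0 0"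
  by (rule coeffwise_affineI) simp_all

lemma coeffwise_affine_fst: "coeffwise_affine x0 y0 (\<lambda>U V. U) x0 1 0"
  by (rule coeffwise_affineI) simp_all

lemma coeffwise_affine_snd: "coeffwise_affine x0 y0 (\<lambda>U V. V) y0 0 1"
  by (rule coeffwise_affineI) simp_all

lemma coeffwise_affine_add:
  assumes P: "coeffwise_affine x0 y0 P p0 a b" and Q: "coeffwise_affine x0 y0 Q q0 c d"
  shows "coeffwise_affine x0 y0 (\<lambda>U V. P U V + Q U V) (p0 + q0) (a + c) (b + d)"
proof (rule coeffwise_affineI)
  fix U V U' V' :: "'a fps" and n :: nat
  assume "0 < n" "U $ 0 = x0" "V $ 0 = y0" "\<And>k. k < n \<Longrightarrow> U $ k = U' $ k \<and> V $ k = V' $ k"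
  with coeffwise_affine_nth_diff[OF P] coeffwise_affine_nth_diff[OF Q]
  show "(P U V + Q U V) $ n - (P U' V' + Q U' V') $ n =
      (a + c) * (U $ n - U' $ n) + (b + d) * (V $ n - V' $ n)"
    by (simp add: algebra_simps)
qed (use coeffwise_affine_nth_0[OF P] coeffwise_affine_nth_0[OF Q] in simp)

lemma coeffwise_affine_mult:
  assumes P: "coeffwise_affine x0 y0 P p0 a b" and Q: "coeffwise_affine x0 y0 Q q0 c d"
  shows "coeffwise_affine x0 y0 (\<lambda>U V. P U V * Q U V) (p0 * q0) (p0 * c + q0 * a) (p0 * d + q0 * b)"
proof (rule coeffwise_affineI)
  fix U V U' V' :: "'a fps" and n :: nat
  assume n: "0 < n" and U0: "U $ 0 = x0" and V0: "V $ 0 = y0"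
    and agree: "\<And>k. k < n \<Longrightarrow> U $ k = U' $ k \<and> V $ k = V' $ k"
  define p p' q q' where defs: "p = P U V" "p' = P U' V'" "q = Q U V" "q' = Q U' V'"
  have p_eq: "p $ i = p' $ i" and q_eq: "q $ i = q' $ i" if "i < n" for i
    using that U0 V0 agree unfolding defs
    by (auto intro!: coeffwise_affine_nth_cong[OF P] coeffwise_affine_nth_cong[OF Q])
  have p0: "p $ 0 = p0" "p' $ 0 = p0" and q0: "q $ 0 = q0"
    using coeffwise_affine_nth_0[OF P U0 V0] coeffwise_affine_nth_0[OF Q U0 V0] p_eq[OF n]
    unfolding defs by simp_all
  have leibniz: "p $ i * q $ (n - i) - p' $ i * q' $ (n - i) =
      (if i = n then (p $ n - p' $ n) * q0 else 0) + (if i = 0 then p0 * (q $ n - q' $ n) else 0)"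
    if "i \<le> n" for i
    using that n p0 q0 p_eq[of i] q_eq[of "n - i"] by (auto simp: algebra_simps)
  have dp: "p $ n - p' $ n = a * (U $ n - U' $ n) + b * (V $ n - V' $ n)"
    unfolding defs by (rule coeffwise_affine_nth_diff[OF P n U0 V0 agree])
  have dq: "q $ n - q' $ n = c * (U $ n - U' $ n) + d * (V $ n - V' $ n)"
    unfolding defs by (rule coeffwise_affine_nth_diff[OF Q n U0 V0 agree])
  from leibniz have "(p * q) $ n - (p' * q') $ n = (p $ n - p' $ n) * q0 + p0 * (q $ n - q' $ n)"
    unfolding fps_mult_nth sum_subtractf[symmetric] by (simp add: sum.distrib)
  also have "\<dots> = (p0 * c + q0 * a) * (U $ n - U' $ n) + (p0 * d + q0 * b) * (V $ n - V' $ n)"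
    unfolding dp dq by (simp add: algebra_simps)
  finally show "(P U V * Q U V) $ n - (P U' V' * Q U' V') $ n =
      (p0 * c + q0 * a) * (U $ n - U' $ n) + (p0 * d + q0 * b) * (V $ n - V' $ n)"
    unfolding defs .
qed (use coeffwise_affine_nth_0[OF P] coeffwise_affine_nth_0[OF Q] in simp)

lemma coeffwise_affine_poly_const_coeffs:
  fixes p :: "'a::idom poly"
  shows "coeffwise_affine varX y0 (\<lambda>U V. poly (map_poly (\<lambda>c. fps_const [:[:c:]:]) p) U)
           [:p:] [:pderiv p:] 0"
proof (induction p)
  case 0
  show ?case using coeffwise_affine_const[of varX y0 0] by simp
next
  case (pCons c p)
  have "coeffwise_affine varX y0
      (\<lambda>U V. fps_const [:[:c:]:] + U * poly (map_poly (\<lambda>c. fps_const [:[:c:]:]) p) U)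
      ([:[:c:]:] + varX * [:p:]) (0 + (varX * [:pderiv p:] + [:p:] * 1)) (0 + (varX * 0 + [:p:] * 0))"
    by (intro coeffwise_affine_add coeffwise_affine_const coeffwise_affine_mult
        coeffwise_affine_fst pCons.IH)
  then show ?case
    by (simp add: map_poly_pCons varX_def pderiv_pCons add.commute)
qed

lemma coeffwise_affine_eval2:
  fixes F :: "'a::idom poly poly"
  shows "coeffwise_affine varX varY (eval2 F) F (pdX F) (pdY F)"
proof (induction F)
  case 0
  show ?case using coeffwise_affine_const[of varX varY 0] by (simp add: eval2_def pdX_def pdY_def)
next
  case (pCons p F)
  have "coeffwise_affine varX varY
      (\<lambda>U V. poly (map_poly (\<lambda>c. fps_const [:[:c:]:]) p) U + V * eval2 F U V)
      ([:p:] + varY * F) ([:pderiv p:] + (varY * pdX F + F * 0)) (0 + (varY * pdY F + F * 1))"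
    by (intro coeffwise_affine_add coeffwise_affine_mult coeffwise_affine_snd
        coeffwise_affine_poly_const_coeffs pCons.IH)
  moreover have "eval2 (pCons p F) U V = poly (map_poly (\<lambda>c. fps_const [:[:c:]:]) p) U + V * eval2 F U V"
    for U V
    unfolding eval2_def by (simp add: map_poly_pCons)
  ultimately show ?case
    by (simp add: varY_def pdX_def pdY_def pderiv_pCons map_poly_pCons add.commute)
qed

lemma cramer_2x2_unique:
  fixes a b c d w u v :: "'a::comm_ring_1"
  assumes "w * (a * d - b * c) = 1" "a * u + b * v = 0" "c * u + d * v = 0"
  shows "u = 0" "v = 0"
proof -
  have "w * (d * (a * u + b * v) - b * (c * u + d * v)) = w * (a * d - b * c) * u"
    and "w * (a * (c * u + d * v) - c * (a * u + b * v)) = w * (a * d - b * c) * v"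
    by (simp_all add: algebra_simps)
  with assms show "u = 0" "v = 0"
    by simp_all
qed

lemma cramer_2x2_solution:
  fixes a b c d w x y :: "'a::comm_ring_1"
  assumes "w * (a * d - b * c) = 1"
  shows "a * (w * (d * x - b * y)) + b * (w * (a * y - c * x)) = x"
    and "c * (w * (d * x - b * y)) + d * (w * (a * y - c * x)) = y"
proof -
  have "a * (w * (d * x - b * y)) + b * (w * (a * y - c * x)) = w * (a * d - b * c) * x"
    and "c * (w * (d * x - b * y)) + d * (w * (a * y - c * x)) = w * (a * d - b * c) * y"
    by (simp_all add: algebra_simps)
  with assms show "a * (w * (d * x - b * y)) + b * (w * (a * y - c * x)) = x"
    and "c * (w * (d * x - b * y)) + d * (w * (a * y - c * x)) = y"
    by simp_all
qed

locale coeffwise_affine_system =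
  fixes P Q :: "'a::comm_ring_1 fps \<Rightarrow> 'a fps \<Rightarrow> 'a fps" and x0 y0 p0 q0 a b c d w :: 'a
  assumes P: "coeffwise_affine x0 y0 P p0 a b" and Q: "coeffwise_affine x0 y0 Q q0 c d"
    and det_inverse: "w * (a * d - b * c) = 1"
begin

lemma coeffs_eq_if_images_coeffs_eq:
  assumes "A $ 0 = x0" "B $ 0 = y0" "A' $ 0 = x0" "B' $ 0 = y0"
    and images: "\<And>k. k \<le> n \<Longrightarrow> P A B $ k = P A' B' $ k \<and> Q A B $ k = Q A' B' $ k"
  shows "k \<le> n \<Longrightarrow> A $ k = A' $ k \<and> B $ k = B' $ k"
proof (induction k rule: less_induct)
  case (less k)
  show ?case
  proof (cases "k = 0")
    case True
    with assms show ?thesis by simp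
  next
    case False
    then have "0 < k" by simp
    have lower: "\<And>i. i < k \<Longrightarrow> A $ i = A' $ i \<and> B $ i = B' $ i"
      using less by simp
    have "a * (A $ k - A' $ k) + b * (B $ k - B' $ k) = 0"
      using coeffwise_affine_nth_diff[OF P \<open>0 < k\<close> assms(1,2) lower] images less.prems by simp
    moreover have "c * (A $ k - A' $ k) + d * (B $ k - B' $ k) = 0"
      using coeffwise_affine_nth_diff[OF Q \<open>0 < k\<close> assms(1,2) lower] images less.prems by simp
    ultimately show ?thesis
      using cramer_2x2_unique[OF det_inverse] by (metis eq_iff_diff_eq_0)
  qed
qed

lemma solvable_up_to:
  assumes "T1 $ 0 = p0" "T2 $ 0 = q0"
  shows "\<exists>A B. A $ 0 = x0 \<and> B $ 0 = y0 \<and> (\<forall>k\<le>n. P A B $ k = T1 $ k \<and> Q A B $ k = T2 $ k)"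
proof (induction n)
  case 0
  show ?case
    using assms coeffwise_affine_nth_0[OF P] coeffwise_affine_nth_0[OF Q]
    by (intro exI[of _ "fps_const x0"] exI[of _ "fps_const y0"]) simp
next
  case (Suc n)
  then obtain A B where A0: "A $ 0 = x0" and B0: "B $ 0 = y0"
    and sol: "\<forall>k\<le>n. P A B $ k = T1 $ k \<and> Q A B $ k = T2 $ k" by blast
  define r s where "r = T1 $ Suc n - P A B $ Suc n" and "s = T2 $ Suc n - Q A B $ Suc n"
  define A' B' where
    "A' = A + fps_const (w * (d * r - b * s)) * fps_X ^ Suc n" and
    "B' = B + fps_const (w * (a * s - c * r)) * fps_X ^ Suc n"
  have A'0: "A' $ 0 = x0" and B'0: "B' $ 0 = y0"
    using A0 B0 unfolding A'_def B'_def by simp_all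
  have lower: "\<And>k. k < Suc n \<Longrightarrow> A' $ k = A $ k \<and> B' $ k = B $ k"
    unfolding A'_def B'_def by auto
  have "P A' B' $ k = P A B $ k \<and> Q A' B' $ k = Q A B $ k" if "k \<le> n" for k
    using that lower
    by (intro conjI coeffwise_affine_nth_cong[OF P A'0 B'0] coeffwise_affine_nth_cong[OF Q A'0 B'0]) auto
  moreover have "P A' B' $ Suc n - P A B $ Suc n = r"
    using coeffwise_affine_nth_diff[OF P _ A'0 B'0 lower] cramer_2x2_solution(1)[OF det_inverse]
    unfolding A'_def B'_def by simp
  moreover have "Q A' B' $ Suc n - Q A B $ Suc n = s"
    using coeffwise_affine_nth_diff[OF Q _ A'0 B'0 lower] cramer_2x2_solution(2)[OF det_inverse]
    unfolding A'_def B'_def by simp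
  ultimately show ?case
    using A'0 B'0 sol unfolding r_def s_def by (auto simp: le_Suc_eq)
qed

theorem ex1_solution:
  assumes "T1 $ 0 = p0" "T2 $ 0 = q0"
  shows "\<exists>!UV. P (fst UV) (snd UV) = T1 \<and> Q (fst UV) (snd UV) = T2 \<and>
                fst UV $ 0 = x0 \<and> snd UV $ 0 = y0"
proof -
  have "\<forall>n. \<exists>AB. fst AB $ 0 = x0 \<and> snd AB $ 0 = y0 \<and>
           (\<forall>k\<le>n. P (fst AB) (snd AB) $ k = T1 $ k \<and> Q (fst AB) (snd AB) $ k = T2 $ k)"
    using solvable_up_to[OF assms] by simp
  then obtain S where S0: "\<And>n. fst (S n) $ 0 = x0" "\<And>n. snd (S n) $ 0 = y0"
    and S: "\<And>n k. k \<le> n \<Longrightarrow>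
              P (fst (S n)) (snd (S n)) $ k = T1 $ k \<and> Q (fst (S n)) (snd (S n)) $ k = T2 $ k"
    by metis
  define U V where "U = Abs_fps (\<lambda>k. fst (S k) $ k)" and "V = Abs_fps (\<lambda>k. snd (S k) $ k)"
  have agree: "U $ k = fst (S n) $ k \<and> V $ k = snd (S n) $ k" if "k \<le> n" for k n
    using coeffs_eq_if_images_coeffs_eq[OF S0[of k] S0[of n], of k] S that
    unfolding U_def V_def by simp
  have U0: "U $ 0 = x0" "V $ 0 = y0"
    using agree[of 0 0] S0 by simp_all
  have "P U V $ n = T1 $ n \<and> Q U V $ n = T2 $ n" for n
    using coeffwise_affine_nth_cong[OF P U0 agree] coeffwise_affine_nth_cong[OF Q U0 agree] S[of n n]
    by simp
  then have solution: "P U V = T1 \<and> Q U V = T2 \<and> U $ 0 = x0 \<and> V $ 0 = y0"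
    using U0 by (simp add: fps_eq_iff)
  show ?thesis
  proof (rule ex1I[of _ "(U, V)"])
    fix UV
    assume "P (fst UV) (snd UV) = T1 \<and> Q (fst UV) (snd UV) = T2 \<and> fst UV $ 0 = x0 \<and> snd UV $ 0 = y0"
    with solution have "fst UV $ k = U $ k \<and> snd UV $ k = V $ k" for k
      using coeffs_eq_if_images_coeffs_eq[of "fst UV" "snd UV" U V k k] by simp
    then show "UV = (U, V)"
      by (simp add: prod_eq_iff fps_eq_iff)
  qed (use solution in simp)
qed

end

theorem theorem3p2:
  fixes F G :: "'a::field_char_0 poly poly"
  assumes jac: "\<exists>c. c \<noteq> 0 \<and> pdX F * pdY G - pdY F * pdX G = [:[:c:]:]"
  shows "\<exists>!UV :: 'a poly poly fps \<times> 'a poly poly fps.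
           eval2 F (fst UV) (snd UV) = fps_X * fps_const varX + (1 - fps_X) * fps_const F \<and>
           eval2 G (fst UV) (snd UV) = fps_X * fps_const varY + (1 - fps_X) * fps_const G \<and>
           fps_nth (fst UV) 0 = varX \<and> fps_nth (snd UV) 0 = varY"
proof -
  obtain c where "c \<noteq> 0" and "pdX F * pdY G - pdY F * pdX G = [:[:c:]:]"
    using jac by blast
  then have "[:[:inverse c:]:] * (pdX F * pdY G - pdY F * pdX G) = 1"
    by (simp add: one_pCons)
  then interpret coeffwise_affine_system "eval2 F" "eval2 G" varX varY F G
      "pdX F" "pdY F" "pdX G" "pdY G" "[:[:inverse c:]:]"
    by unfold_locales (rule coeffwise_affine_eval2)+
  show ?thesis
    by (rule ex1_solution) simp_all
qed

end
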